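(* Let $X,Y,Z$ be finite random variables forming a Markov chain $X \leftrightarrow Y \leftrightarrow Z$. For $x\in\mathcal X$ let $[x]_{X,Y}$ and $[x]_{X,Z}$ denote the equivalence classes of $x$ under $p_{X,Y}$ and under $p_{X,Z}$, respectively. Then for every $x\in\mathcal X$ such that $p_{X,Z}(x,z)>0$ for some $z\in\mathcal Z$, we have $[x]_{X,Y}\subseteq [x]_{X,Z}$.
   Context: For finite random variables $X,Y$ with (w.l.o.g. disjoint) alphabets $\mathcal X,\mathcal Y$, the bipartite representation $\mathcal B_{X,Y}$ is the bipartite graph with vertex set $\mathcal X\cup\mathcal Y$ and an edge between $x\in\mathcal X$ and $y\in\mathcal Y$ iff $p(X=x)>0$ and $P(Y=y\mid X=x)>0$. The equivalence class $[x]_{X,Y}$ of $x\in\mathcal X$ is the set of $x'\in\mathcal X$ such that there is a path between $x$ and $x'$ in $\mathcal B_{X,Y}$. The classes $[x]_{X,Z}$ are defined analogously from $\mathcal B_{X,Z}$. *)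

theory Defs
  imports "HOL-Probability.Probability"
begin

text \<open>Finite random variables X, Y, Z are given by a joint pmf on
  'a \<times> 'b \<times> 'c with finite alphabet types.\<close>

definition pXY :: "('a \<times> 'b \<times> 'c) pmf \<Rightarrow> ('a \<times> 'b) pmf" where
  "pXY p = map_pmf (\<lambda>(x, y, z). (x, y)) p"

definition pXZ :: "('a \<times> 'b \<times> 'c) pmf \<Rightarrow> ('a \<times> 'c) pmf" where
  "pXZ p = map_pmf (\<lambda>(x, y, z). (x, z)) p"

definition pYZ :: "('a \<times> 'b \<times> 'c) pmf \<Rightarrow> ('b \<times> 'c) pmf" where
  "pYZ p = map_pmf (\<lambda>(x, y, z). (y, z)) p"

definition pY :: "('a \<times> 'b \<times> 'c) pmf \<Rightarrow> 'b pmf" where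
  "pY p = map_pmf (\<lambda>(x, y, z). y) p"

text \<open>Markov chain X -- Y -- Z: X and Z conditionally independent given Y,
  i.e. p(x,y,z) p(y) = p(x,y) p(y,z).\<close>
definition markov_chain :: "('a \<times> 'b \<times> 'c) pmf \<Rightarrow> bool" where
  "markov_chain p \<longleftrightarrow>
     (\<forall>x y z. pmf p (x, y, z) * pmf (pY p) y = pmf (pXY p) (x, y) * pmf (pYZ p) (y, z))"

text \<open>Edge set of the bipartite representation of a pair (X,Y) with joint pmf q,
  on the disjoint union of the alphabets (undirected: stored symmetrically).\<close>
definition bip_edges :: "('a \<times> 'b) pmf \<Rightarrow> ('a + 'b) rel" where
  "bip_edges q =
     (let E = {(Inl x, Inr y) | x y. pmf (map_pmf fst q) x > 0 \<and>
                                      pmf q (x, y) / pmf (map_pmf fst q) x > 0}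
      in E \<union> E\<inverse>)"

definition eq_class :: "('a \<times> 'b) pmf \<Rightarrow> 'a \<Rightarrow> 'a set" where
  "eq_class q x = {x'. (Inl x, Inl x') \<in> (bip_edges q)\<^sup>*}"

end

theory Submission
  imports Defs
begin

text \<open>Two symbols of \<open>\<X>\<close> lie in the same class iff they are joined by a chain in which
  consecutive symbols share a neighbour in the bipartite graph. If \<open>x\<close> and \<open>x'\<close> share a
  neighbour \<open>y\<close>, pick any \<open>z\<close> with \<open>p(x,y,z) > 0\<close>; the Markov property
  \<open>p(x',y,z) p(y) = p(x',y) p(y,z)\<close> forces \<open>p(x',y,z) > 0\<close>, so \<open>x\<close> and \<open>x'\<close> share the
  neighbour \<open>z\<close> as well. Hence every chain for \<open>(X,Y)\<close> is a chain for \<open>(X,Z)\<close>.\<close>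

definition common_neighbour :: "('a \<times> 'b) pmf \<Rightarrow> 'a rel" where
  "common_neighbour q = {(a, a'). \<exists>b. (a, b) \<in> set_pmf q \<and> (a', b) \<in> set_pmf q}"

lemma bip_edges_iff:
  "(u, v) \<in> bip_edges q \<longleftrightarrow>
     (\<exists>a b. (u = Inl a \<and> v = Inr b \<or> u = Inr b \<and> v = Inl a) \<and> (a, b) \<in> set_pmf q)"
proof -
  have "pmf (map_pmf fst q) a > 0 \<and> pmf q (a, b) / pmf (map_pmf fst q) a > 0
      \<longleftrightarrow> (a, b) \<in> set_pmf q" for a b
  proof
    assume "(a, b) \<in> set_pmf q"
    moreover from this have "a \<in> set_pmf (map_pmf fst q)" by force
    ultimately show "pmf (map_pmf fst q) a > 0 \<and> pmf q (a, b) / pmf (map_pmf fst q) a > 0"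
      by (simp add: pmf_positive)
  qed (simp add: zero_less_divide_iff set_pmf_iff)
  then show ?thesis unfolding bip_edges_def Let_def by blast
qed

lemma eq_class_eq_common_neighbour_rtrancl:
  "eq_class q x = {x'. (x, x') \<in> (common_neighbour q)\<^sup>*}"
proof (intro set_eqI iffI; simp only: mem_Collect_eq eq_class_def)
  fix x'
  assume "(Inl x, Inl x') \<in> (bip_edges q)\<^sup>*"
  moreover
  have "(\<forall>a. v = Inl a \<longrightarrow> (x, a) \<in> (common_neighbour q)\<^sup>*) \<and>
        (\<forall>b. v = Inr b \<longrightarrow> (\<exists>a. (a, b) \<in> set_pmf q \<and> (x, a) \<in> (common_neighbour q)\<^sup>*))"
    if "(Inl x, v) \<in> (bip_edges q)\<^sup>*" for v
    using that
  proof (induction rule: rtrancl_induct)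
    case (step v w)
    then obtain a b where ab: "(a, b) \<in> set_pmf q"
      and "v = Inl a \<and> w = Inr b \<or> v = Inr b \<and> w = Inl a"
      by (auto simp: bip_edges_iff)
    then consider "v = Inl a" "w = Inr b" | "v = Inr b" "w = Inl a" by blast
    then show ?case
    proof cases
      case 2
      with step.IH obtain a' where "(a', b) \<in> set_pmf q" "(x, a') \<in> (common_neighbour q)\<^sup>*"
        by auto
      with ab have "(x, a) \<in> (common_neighbour q)\<^sup>*"
        by (auto simp: common_neighbour_def intro: rtrancl_into_rtrancl)
      with 2 show ?thesis by simp
    qed (use step.IH ab in auto)
  qed simp
  ultimately show "(x, x') \<in> (common_neighbour q)\<^sup>*" by blast
next
  fix x'
  assume "(x, x') \<in> (common_neighbour q)\<^sup>*"
  then show "(Inl x, Inl x') \<in> (bip_edges q)\<^sup>*"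
  proof (induction rule: rtrancl_induct)
    case (step a a')
    then obtain b where "(a, b) \<in> set_pmf q" "(a', b) \<in> set_pmf q"
      by (auto simp: common_neighbour_def)
    then have "(Inl a, Inr b) \<in> bip_edges q" "(Inr b, Inl a') \<in> bip_edges q"
      by (auto simp: bip_edges_iff)
    with step.IH show ?case by (meson rtrancl.rtrancl_into_rtrancl)
  qed simp
qed

lemma set_pmf_pXY: "(a, b) \<in> set_pmf (pXY p) \<longleftrightarrow> (\<exists>c. (a, b, c) \<in> set_pmf p)"
  unfolding pXY_def by force

lemma set_pmf_pXZ: "(a, c) \<in> set_pmf (pXZ p) \<longleftrightarrow> (\<exists>b. (a, b, c) \<in> set_pmf p)"
  unfolding pXZ_def by force

lemma markov_chain_support_exchange:
  assumes "markov_chain p" and "(a, b, c) \<in> set_pmf p" and "(a', b) \<in> set_pmf (pXY p)"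
  shows "(a', b, c) \<in> set_pmf p"
proof -
  have "(b, c) \<in> set_pmf (pYZ p)"
    using assms(2) unfolding pYZ_def by force
  with assms(3) have "pmf (pXY p) (a', b) * pmf (pYZ p) (b, c) \<noteq> 0"
    by (simp add: set_pmf_iff)
  moreover have "pmf p (a', b, c) * pmf (pY p) b = pmf (pXY p) (a', b) * pmf (pYZ p) (b, c)"
    using assms(1) unfolding markov_chain_def by blast
  ultimately have "pmf p (a', b, c) \<noteq> 0" by force
  then show ?thesis by (simp add: set_pmf_iff)
qed

lemma markov_chain_common_neighbour_subset:
  assumes "markov_chain p"
  shows "common_neighbour (pXY p) \<subseteq> common_neighbour (pXZ p)"
proof clarify
  fix a a'
  assume "(a, a') \<in> common_neighbour (pXY p)"
  then obtain b c where abc: "(a, b, c) \<in> set_pmf p" and "(a', b) \<in> set_pmf (pXY p)"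
    by (auto simp: common_neighbour_def set_pmf_pXY)
  with assms have "(a', b, c) \<in> set_pmf p"
    by (rule markov_chain_support_exchange)
  with abc show "(a, a') \<in> common_neighbour (pXZ p)"
    by (auto simp: common_neighbour_def set_pmf_pXZ)
qed

theorem lemma2:
  fixes p :: "('a::finite \<times> 'b::finite \<times> 'c::finite) pmf"
    and x :: 'a
  assumes "markov_chain p"
    and "\<exists>z. pmf (pXZ p) (x, z) > 0"
  shows "eq_class (pXY p) x \<subseteq> eq_class (pXZ p) x"
  using rtrancl_mono[OF markov_chain_common_neighbour_subset[OF assms(1)]]
  by (auto simp: eq_class_eq_common_neighbour_rtrancl)

end
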